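(* Let $\mathcal{U}_s=\{{\bf U}\in\mathbb{C}^{n\times n}:{\bf U}{\bf U}^H={\bf I}_n,\ {\bf U}={\bf U}^T\}$. For a complex symmetric matrix ${\bf A}={\bf A}^T\in\mathbb{C}^{n\times n}$ with Takagi factorization ${\bf A}={\bf Q}\boldsymbol{\Sigma}{\bf Q}^T$, define $\Pi({\bf A})={\bf Q}{\bf Q}^T$. Then $\Pi({\bf A})\in\mathcal{U}_s$ and $\Pi({\bf A})$ is a unitary symmetric matrix closest to ${\bf A}$ in Frobenius norm, i.e. $\|{\bf A}-\Pi({\bf A})\|_F=\min_{{\bf U}\in\mathcal{U}_s}\|{\bf A}-{\bf U}\|_F$ (if there are several minimizers, $\Pi({\bf A})$ is one of them).
   Context: Takagi factorization: every complex symmetric ${\bf A}={\bf A}^T\in\mathbb{C}^{n\times n}$ can be written as ${\bf A}={\bf Q}\boldsymbol{\Sigma}{\bf Q}^T$ where ${\bf Q}$ is an $n\times n$ unitary matrix and $\boldsymbol{\Sigma}=\operatorname{diag}(\sigma_1,\ldots,\sigma_n)$ with $\sigma_1\ge\cdots\ge\sigma_n\ge 0$. $\|\cdot\|_F$ is the Frobenius norm. *)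

theory Defs
  imports Complex_Main "Jordan_Normal_Form.Matrix"
begin

definition conj_transpose :: "complex mat \<Rightarrow> complex mat" where
  "conj_transpose A = transpose_mat (map_mat cnj A)"

definition unitary_mat :: "nat \<Rightarrow> complex mat \<Rightarrow> bool" where
  "unitary_mat n U \<longleftrightarrow> U \<in> carrier_mat n n \<and> U * conj_transpose U = 1\<^sub>m n"

definition unitary_symmetric :: "nat \<Rightarrow> complex mat set" where
  "unitary_symmetric n =
     {U. U \<in> carrier_mat n n \<and> U * conj_transpose U = 1\<^sub>m n \<and> U = transpose_mat U}"

definition frob_norm :: "complex mat \<Rightarrow> real" where
  "frob_norm A = sqrt (\<Sum>i<dim_row A. \<Sum>j<dim_col A. (cmod (A $$ (i, j)))\<^sup>2)"

definition diag_real :: "nat \<Rightarrow> (nat \<Rightarrow> real) \<Rightarrow> complex mat" where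
  "diag_real n \<sigma> = mat n n (\<lambda>(i, j). if i = j then complex_of_real (\<sigma> i) else 0)"

definition takagi_factorization :: "nat \<Rightarrow> complex mat \<Rightarrow> complex mat \<Rightarrow> (nat \<Rightarrow> real) \<Rightarrow> bool" where
  "takagi_factorization n A Q \<sigma> \<longleftrightarrow>
     unitary_mat n Q \<and>
     (\<forall>i<n. 0 \<le> \<sigma> i) \<and> (\<forall>i j. i \<le> j \<and> j < n \<longrightarrow> \<sigma> j \<le> \<sigma> i) \<and>
     A = Q * diag_real n \<sigma> * transpose_mat Q"

end

theory Submission
  imports Defs "Jordan_Normal_Form.Determinant"
begin

text \<open>For unitary \<open>U\<close> one has \<open>\<parallel>A - U\<parallel>\<^sub>F\<^sup>2 = \<parallel>A\<parallel>\<^sub>F\<^sup>2 + n - 2 Re tr(A U\<^sup>H)\<close>, so a closest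
  unitary matrix is one maximising \<open>Re tr(A U\<^sup>H)\<close>. For \<open>A = Q \<Sigma> Q\<^sup>T\<close> this trace equals
  \<open>tr(\<Sigma> W)\<close> with \<open>W = Q\<^sup>T U\<^sup>H Q\<close> unitary. Diagonal entries of a unitary matrix have modulus
  at most 1, hence \<open>Re tr(A U\<^sup>H) \<le> \<sigma>\<^sub>1 + \<dots> + \<sigma>\<^sub>n\<close>, with equality for \<open>U = Q Q\<^sup>T\<close>, where
  \<open>W = I\<close>. So \<open>Q Q\<^sup>T\<close>, which is symmetric, is closest to \<open>A\<close> even among all unitary matrices.\<close>

lemma conj_transpose_carrier_mat [simp]:
  "conj_transpose A \<in> carrier_mat n m \<longleftrightarrow> A \<in> carrier_mat m n"
  by (auto simp: conj_transpose_def)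

lemma dim_conj_transpose [simp]:
  "dim_row (conj_transpose A) = dim_col A" "dim_col (conj_transpose A) = dim_row A"
  by (simp_all add: conj_transpose_def)

lemma index_conj_transpose [simp]:
  "i < dim_col A \<Longrightarrow> j < dim_row A \<Longrightarrow> conj_transpose A $$ (i, j) = cnj (A $$ (j, i))"
  by (simp add: conj_transpose_def)

lemma conj_transpose_conj_transpose [simp]: "conj_transpose (conj_transpose A) = A"
  by (intro eq_matI) auto

lemma conj_transpose_mult:
  assumes "A \<in> carrier_mat m k" "B \<in> carrier_mat k n"
  shows "conj_transpose (A * B) = conj_transpose B * conj_transpose A"
  using assms by (intro eq_matI) (auto simp: scalar_prod_def cnj_sum mult.commute)

lemma transpose_conj_transpose: "transpose_mat (conj_transpose A) = map_mat cnj A"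
  by (intro eq_matI) auto

lemma conj_transpose_transpose: "conj_transpose (transpose_mat A) = map_mat cnj A"
  by (intro eq_matI) (auto simp: conj_transpose_def)

lemma unitary_mat_left_inverse:
  assumes "unitary_mat n U"
  shows "conj_transpose U * U = 1\<^sub>m n"
  using assms mat_mult_left_right_inverse[of U n "conj_transpose U"]
  by (simp add: unitary_mat_def)

lemma unitary_mat_conj_transpose:
  assumes "unitary_mat n U"
  shows "unitary_mat n (conj_transpose U)"
  using assms unitary_mat_left_inverse[OF assms] by (simp add: unitary_mat_def)

lemma unitary_mat_transpose:
  assumes "unitary_mat n U"
  shows "unitary_mat n (transpose_mat U)"
proof -
  have U: "U \<in> carrier_mat n n" using assms by (simp add: unitary_mat_def)
  have "transpose_mat U * conj_transpose (transpose_mat U)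
      = transpose_mat U * transpose_mat (conj_transpose U)"
    by (simp add: conj_transpose_transpose transpose_conj_transpose)
  also have "\<dots> = transpose_mat (conj_transpose U * U)"
    using U by (simp add: transpose_mult[of _ n n])
  also have "\<dots> = 1\<^sub>m n"
    by (simp add: unitary_mat_left_inverse[OF assms])
  finally show ?thesis using U by (simp add: unitary_mat_def)
qed

lemma unitary_mat_mult:
  assumes U: "unitary_mat n U" and V: "unitary_mat n V"
  shows "unitary_mat n (U * V)"
proof -
  have carrier: "U \<in> carrier_mat n n" "V \<in> carrier_mat n n"
    using U V by (simp_all add: unitary_mat_def)
  have "U * V * conj_transpose (U * V) = U * (V * conj_transpose V) * conj_transpose U"
    using carrier by (simp add: conj_transpose_mult[of _ n n] assoc_mult_mat[of _ n n _ n _ n])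
  also have "\<dots> = 1\<^sub>m n"
    using U V carrier by (simp add: unitary_mat_def)
  finally show ?thesis using carrier by (simp add: unitary_mat_def)
qed

lemma unitary_mat_row_norm:
  assumes U: "unitary_mat n U" and k: "k < n"
  shows "(\<Sum>j<n. (cmod (U $$ (k, j)))\<^sup>2) = 1"
proof -
  have Uc: "U \<in> carrier_mat n n" and UU: "U * conj_transpose U = 1\<^sub>m n"
    using U by (simp_all add: unitary_mat_def)
  have "of_real (\<Sum>j<n. (cmod (U $$ (k, j)))\<^sup>2) = (\<Sum>j<n. U $$ (k, j) * cnj (U $$ (k, j)))"
    unfolding of_real_sum complex_norm_square by simp
  also have "\<dots> = (U * conj_transpose U) $$ (k, k)"
    using Uc k by (auto simp: scalar_prod_def atLeast0LessThan intro!: sum.cong)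
  also have "\<dots> = 1"
    using k by (simp add: UU)
  finally show ?thesis by (simp only: of_real_eq_1_iff)
qed

lemma unitary_mat_diag_norm_le_1:
  assumes U: "unitary_mat n U" and k: "k < n"
  shows "cmod (U $$ (k, k)) \<le> 1"
proof -
  have "(cmod (U $$ (k, k)))\<^sup>2 \<le> (\<Sum>j<n. (cmod (U $$ (k, j)))\<^sup>2)"
    using k by (intro member_le_sum) auto
  then have "(cmod (U $$ (k, k)))\<^sup>2 \<le> 1"
    by (simp only: unitary_mat_row_norm[OF U k])
  then show ?thesis by (simp add: power_le_one_iff abs_le_square_iff)
qed

definition trace :: "'a :: comm_semiring_0 mat \<Rightarrow> 'a" where
  "trace A = (\<Sum>i<dim_row A. A $$ (i, i))"

lemma trace_mult_comm:
  assumes "A \<in> carrier_mat n m" "B \<in> carrier_mat m n"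
  shows "trace (A * B) = trace (B * A)"
proof -
  have "trace (A * B) = (\<Sum>i<n. \<Sum>j<m. A $$ (i, j) * B $$ (j, i))"
    using assms by (auto simp: trace_def scalar_prod_def atLeast0LessThan intro!: sum.cong)
  also have "\<dots> = (\<Sum>j<m. \<Sum>i<n. B $$ (j, i) * A $$ (i, j))"
    by (subst sum.swap) (simp add: mult.commute)
  also have "\<dots> = trace (B * A)"
    using assms by (auto simp: trace_def scalar_prod_def atLeast0LessThan intro!: sum.cong)
  finally show ?thesis .
qed

lemma trace_mult_conj_transpose:
  assumes "A \<in> carrier_mat m n" "B \<in> carrier_mat m n"
  shows "trace (A * conj_transpose B) = (\<Sum>i<m. \<Sum>j<n. A $$ (i, j) * cnj (B $$ (i, j)))"
  using assms by (auto simp: trace_def scalar_prod_def atLeast0LessThan intro!: sum.cong)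

lemma trace_diag_real_mult:
  assumes "W \<in> carrier_mat n n"
  shows "trace (diag_real n \<sigma> * W) = (\<Sum>k<n. of_real (\<sigma> k) * W $$ (k, k))"
proof -
  have "(\<Sum>i<n. (if k = i then of_real (\<sigma> k) else 0) * W $$ (i, k)) = of_real (\<sigma> k) * W $$ (k, k)"
    if "k < n" for k
  proof -
    have "(\<Sum>i<n. (if k = i then of_real (\<sigma> k) else 0) * W $$ (i, k))
        = (\<Sum>i<n. if k = i then of_real (\<sigma> k) * W $$ (i, k) else 0)"
      by (intro sum.cong) auto
    then show ?thesis using that by simp
  qed
  then show ?thesis
    using assms
    by (auto simp: trace_def diag_real_def scalar_prod_def atLeast0LessThan intro!: sum.cong)
qed

lemma re_trace_diag_real_unitary_le:
  assumes \<sigma>: "\<forall>k<n. 0 \<le> \<sigma> k" and W: "unitary_mat n W"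
  shows "Re (trace (diag_real n \<sigma> * W)) \<le> (\<Sum>k<n. \<sigma> k)"
proof -
  have "Re (trace (diag_real n \<sigma> * W)) = (\<Sum>k<n. \<sigma> k * Re (W $$ (k, k)))"
    using W by (simp add: unitary_mat_def trace_diag_real_mult Re_sum)
  also have "\<dots> \<le> (\<Sum>k<n. \<sigma> k)"
  proof (rule sum_mono)
    fix k assume "k \<in> {..<n}"
    then have "Re (W $$ (k, k)) \<le> 1"
      using unitary_mat_diag_norm_le_1[OF W] complex_Re_le_cmod order_trans by blast
    with \<sigma> \<open>k \<in> {..<n}\<close> show "\<sigma> k * Re (W $$ (k, k)) \<le> \<sigma> k"
      by (simp add: mult_left_le)
  qed
  finally show ?thesis .
qed

lemma frob_norm_square:
  "(frob_norm A)\<^sup>2 = (\<Sum>i<dim_row A. \<Sum>j<dim_col A. (cmod (A $$ (i, j)))\<^sup>2)"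
  by (simp add: frob_norm_def sum_nonneg)

lemma frob_norm_nonneg: "0 \<le> frob_norm A"
  by (simp add: frob_norm_def sum_nonneg)

lemma frob_norm_square_trace:
  assumes "A \<in> carrier_mat m n"
  shows "(frob_norm A)\<^sup>2 = Re (trace (A * conj_transpose A))"
  using assms
  by (simp add: frob_norm_square trace_mult_conj_transpose Re_sum complex_norm_square[symmetric])

lemma frob_norm_diff_square:
  assumes "A \<in> carrier_mat m n" "B \<in> carrier_mat m n"
  shows "(frob_norm (A - B))\<^sup>2
    = (frob_norm A)\<^sup>2 + (frob_norm B)\<^sup>2 - 2 * Re (trace (A * conj_transpose B))"
proof -
  have "(cmod (a - b))\<^sup>2 = (cmod a)\<^sup>2 + (cmod b)\<^sup>2 - 2 * Re (a * cnj b)" for a b :: complex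
    by (simp add: cmod_power2 power2_diff algebra_simps)
  then show ?thesis
    using assms
    by (simp add: frob_norm_square trace_mult_conj_transpose Re_sum
        sum.distrib sum_subtractf sum_distrib_left)
qed

lemma frob_norm_unitary_square:
  assumes "unitary_mat n U"
  shows "(frob_norm U)\<^sup>2 = real n"
  using assms frob_norm_square_trace[of U n n] by (simp add: unitary_mat_def trace_def)

lemma trace_takagi_mult_conj_transpose:
  assumes "takagi_factorization n A Q \<sigma>" and U: "U \<in> carrier_mat n n"
  shows "trace (A * conj_transpose U)
    = trace (diag_real n \<sigma> * (transpose_mat Q * conj_transpose U * Q))"
proof -
  have Q: "Q \<in> carrier_mat n n" and A: "A = Q * diag_real n \<sigma> * transpose_mat Q"
    using assms by (simp_all add: takagi_factorization_def unitary_mat_def)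
  have D: "diag_real n \<sigma> \<in> carrier_mat n n"
    by (simp add: diag_real_def)
  have "trace (A * conj_transpose U) = trace (Q * (diag_real n \<sigma> * transpose_mat Q * conj_transpose U))"
    using Q D U by (simp add: A assoc_mult_mat[of _ n n _ n _ n])
  also have "\<dots> = trace (diag_real n \<sigma> * transpose_mat Q * conj_transpose U * Q)"
    using Q D U by (intro trace_mult_comm[of _ n n]) auto
  also have "\<dots> = trace (diag_real n \<sigma> * (transpose_mat Q * conj_transpose U * Q))"
    using Q D U by (simp add: assoc_mult_mat[of _ n n _ n _ n])
  finally show ?thesis .
qed

lemma re_trace_takagi_unitary_le:
  assumes takagi: "takagi_factorization n A Q \<sigma>" and U: "unitary_mat n U"
  shows "Re (trace (A * conj_transpose U)) \<le> (\<Sum>k<n. \<sigma> k)"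
proof -
  have Q: "unitary_mat n Q" and \<sigma>: "\<forall>k<n. 0 \<le> \<sigma> k"
    using takagi by (simp_all add: takagi_factorization_def)
  have "unitary_mat n (transpose_mat Q * conj_transpose U * Q)"
    by (intro unitary_mat_mult unitary_mat_transpose unitary_mat_conj_transpose Q U)
  then show ?thesis
    using U \<sigma> by (simp add: trace_takagi_mult_conj_transpose[OF takagi] unitary_mat_def
        re_trace_diag_real_unitary_le)
qed

lemma re_trace_takagi_mult_transpose:
  assumes takagi: "takagi_factorization n A Q \<sigma>"
  shows "Re (trace (A * conj_transpose (Q * transpose_mat Q))) = (\<Sum>k<n. \<sigma> k)"
proof -
  have Q: "unitary_mat n Q" and Qc: "Q \<in> carrier_mat n n"
    using takagi by (simp_all add: takagi_factorization_def unitary_mat_def)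
  have "transpose_mat Q * conj_transpose (Q * transpose_mat Q) * Q
      = (transpose_mat Q * conj_transpose (transpose_mat Q)) * (conj_transpose Q * Q)"
    using Qc by (simp add: conj_transpose_mult[of _ n n] assoc_mult_mat[of _ n n _ n _ n])
  also have "\<dots> = 1\<^sub>m n"
    using unitary_mat_transpose[OF Q] unitary_mat_left_inverse[OF Q]
    by (simp add: unitary_mat_def)
  finally show ?thesis
    using Qc by (simp add: trace_takagi_mult_conj_transpose[OF takagi] trace_diag_real_mult Re_sum)
qed

lemma takagi_closest_unitary:
  assumes takagi: "takagi_factorization n A Q \<sigma>" and U: "unitary_mat n U"
  shows "frob_norm (A - Q * transpose_mat Q) \<le> frob_norm (A - U)"
proof -
  have Q: "unitary_mat n Q"
    using takagi by (simp add: takagi_factorization_def)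
  have QQt: "unitary_mat n (Q * transpose_mat Q)"
    by (intro unitary_mat_mult unitary_mat_transpose Q)
  have "Q \<in> carrier_mat n n" "diag_real n \<sigma> \<in> carrier_mat n n"
    using Q by (simp_all add: unitary_mat_def diag_real_def)
  then have A: "A \<in> carrier_mat n n"
    using takagi by (simp add: takagi_factorization_def)
  have "U \<in> carrier_mat n n" "Q * transpose_mat Q \<in> carrier_mat n n"
    using U QQt by (simp_all add: unitary_mat_def)
  then have "(frob_norm (A - Q * transpose_mat Q))\<^sup>2 \<le> (frob_norm (A - U))\<^sup>2"
    using A frob_norm_unitary_square[OF U] frob_norm_unitary_square[OF QQt]
      re_trace_takagi_unitary_le[OF takagi U] re_trace_takagi_mult_transpose[OF takagi]
    by (simp add: frob_norm_diff_square)
  then show ?thesis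
    using frob_norm_nonneg power2_le_imp_le by blast
qed

theorem proposition2:
  fixes n :: nat and A Q :: "complex mat" and \<sigma> :: "nat \<Rightarrow> real"
  assumes "A \<in> carrier_mat n n"
    and "A = transpose_mat A"
    and "takagi_factorization n A Q \<sigma>"
  shows "Q * transpose_mat Q \<in> unitary_symmetric n \<and>
         (\<forall>U \<in> unitary_symmetric n. frob_norm (A - Q * transpose_mat Q) \<le> frob_norm (A - U))"
proof
  have Q: "unitary_mat n Q"
    using assms(3) by (simp add: takagi_factorization_def)
  then have "Q \<in> carrier_mat n n"
    by (simp add: unitary_mat_def)
  then have "transpose_mat (Q * transpose_mat Q) = Q * transpose_mat Q"
    by (simp add: transpose_mult[of _ n n])
  moreover have "unitary_mat n (Q * transpose_mat Q)"
    using Q by (intro unitary_mat_mult unitary_mat_transpose)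
  ultimately show "Q * transpose_mat Q \<in> unitary_symmetric n"
    by (simp add: unitary_symmetric_def unitary_mat_def)
  show "\<forall>U \<in> unitary_symmetric n. frob_norm (A - Q * transpose_mat Q) \<le> frob_norm (A - U)"
    using takagi_closest_unitary[OF assms(3)] by (simp add: unitary_symmetric_def unitary_mat_def)
qed

end
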